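(* For all integers $n\geq 0$, \[ \sum_{k=0}^{\lfloor (n+1)/2\rfloor}(-1)^k\frac{\binom{2(n-k)}{n-k}}{\binom nk}\frac{(n+1-2k)_{2k}}{(k!)^2}=2^n \] and \[ \sum_{k=0}^{\lfloor (n+1)/2\rfloor}(-1)^k\frac{\binom{2(n-k)}{n-k}}{\binom nk}\frac{(n+1-2k)_{2k}}{(k!)^2}O_{n-k}=2^nH_n. \]
   Context: $(\lambda)_m=\lambda(\lambda+1)\cdots(\lambda+m-1)$ with $(\lambda)_0=1$ is the Pochhammer symbol. $H_n=\sum_{j=1}^n\frac1j$ ($H_0=0$) and $O_n=\sum_{j=1}^n\frac1{2j-1}$ ($O_0=0$). Terms with $k>n$ vanish because of the factor $(n+1-2k)_{2k}=0$ (by convention such terms are $0$; this only occurs for $n=0$... not at all, since $\lfloor (n+1)/2\rfloor\le n$ for $n\ge1$ and the sum is the single term $k=0$ for $n=0$). *)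

theory Defs
  imports "HOL-Analysis.Analysis"
begin

definition oharm :: "nat \<Rightarrow> real" where
  "oharm n = (\<Sum>j=1..n. 1 / (2 * real j - 1))"

end

(* With m = n - k the k-th summand is (-1)^k C(2m,m) C(m,k), so the two sums are the n-th
   coefficients of F(x - x^2) and G(x - x^2), where F = sum_m C(2m,m) x^m and
   G = sum_m C(2m,m) O_m x^m. The coefficient recurrences of F and G amount to
   (1 - 4x) F' = 2F and (1 - 4x) G' = 2G + 2F. Since 1 - 4(x - x^2) = (1 - 2x)^2 and
   (x - x^2)' = 1 - 2x, the composites A and B satisfy (1 - 2x) A' = 2A and
   (1 - 2x) B' = 2B + 2A, whose coefficients with A(0) = 1, B(0) = 0 are 2^n and 2^n H_n. *)
theory Submission
  imports Defs "HOL-Computational_Algebra.Formal_Power_Series"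
begin
unbundle no vec_syntax
notation fps_nth (infixl \<open>$\<close> 75)

definition central_binomial :: "nat \<Rightarrow> nat" where
  "central_binomial m = (2 * m) choose m"

lemma central_binomial_Suc:
  "of_nat (Suc m) * of_nat (central_binomial (Suc m))
     = (4 * of_nat m + 2 :: 'a::comm_semiring_1) * of_nat (central_binomial m)"
proof -
  have step: "Suc m * ((2 * Suc m) choose Suc m) = (2 * m + 2) * ((2 * m + 1) choose m)"
    using Suc_times_binomial[of m "2 * m + 1"] by simp
  have absorb: "Suc m * ((2 * m + 1) choose m) = (2 * m + 1) * ((2 * m) choose m)"
    using binomial_absorb_comp[of "2 * m + 1" m] by (simp add: Suc_diff_le)
  have "Suc m * (Suc m * ((2 * Suc m) choose Suc m)) = (2 * m + 2) * (Suc m * ((2 * m + 1) choose m))"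
    by (simp only: step mult.left_commute)
  also have "\<dots> = Suc m * ((4 * m + 2) * ((2 * m) choose m))"
    by (simp only: absorb) (simp add: algebra_simps)
  finally have "Suc m * central_binomial (Suc m) = (4 * m + 2) * central_binomial m"
    unfolding central_binomial_def by (metis nat.distinct(1) mult_left_cancel)
  then have "of_nat (Suc m * central_binomial (Suc m)) = (of_nat ((4 * m + 2) * central_binomial m) :: 'a)"
    by (rule arg_cong)
  then show ?thesis by (simp add: algebra_simps)
qed

lemma pochhammer_double_div_fact_square:
  "pochhammer (of_nat n + 1 - 2 * of_nat k) (2 * k) / fact k ^ 2
     = (of_nat (n choose k) * of_nat ((n - k) choose k) :: 'a::field_char_0)"
proof -
  have "pochhammer (of_nat n + 1 - 2 * of_nat k) (2 * k) / fact k ^ 2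
      = (of_nat (n choose (2 * k)) * of_nat ((2 * k) choose k) :: 'a)"
    using gbinomial_pochhammer'[of "of_nat n :: 'a" "2 * k"]
    by (simp add: binomial_gbinomial [symmetric] binomial_fact field_simps power2_eq_square)
  also have "\<dots> = of_nat (n choose k) * of_nat ((n - k) choose k)"
  proof (cases "2 * k \<le> n")
    case True
    then show ?thesis using choose_mult[of k "2 * k" n] by (simp flip: of_nat_mult)
  next
    case False
    then show ?thesis by (simp add: binomial_eq_0)
  qed
  finally show ?thesis .
qed

lemma one_minus_fps_X_power_nth:
  "((1 - fps_X :: 'a::comm_ring_1 fps) ^ i) $ j = (-1) ^ j * of_nat (i choose j)"
proof (induction i arbitrary: j)
  case 0
  then show ?case by (cases j) auto
next
  case (Suc i)
  have "((1 - fps_X :: 'a fps) ^ Suc i) $ j = ((1 - fps_X) ^ i) $ j - (fps_X * (1 - fps_X) ^ i) $ j"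
    by (simp add: algebra_simps)
  also have "\<dots> = (-1) ^ j * of_nat (Suc i choose j)"
    using Suc.IH by (cases j) (simp_all add: algebra_simps)
  finally show ?case .
qed

lemma fps_X_minus_X2_power_nth:
  "((fps_X - fps_X ^ 2 :: 'a::comm_ring_1 fps) ^ i) $ n
     = (if i \<le> n then (-1) ^ (n - i) * of_nat (i choose (n - i)) else 0)"
proof -
  have factor: "(fps_X - fps_X ^ 2 :: 'a fps) ^ i = fps_X ^ i * (1 - fps_X) ^ i"
    by (simp add: power_mult_distrib [symmetric] algebra_simps power2_eq_square)
  show ?thesis
    unfolding factor fps_X_power_mult_nth one_minus_fps_X_power_nth by simp
qed

lemma sum_choose_diff_truncate:
  fixes f :: "nat \<Rightarrow> 'a::semiring_1"
  assumes "n div 2 \<le> m"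
  shows "(\<Sum>k=0..m. f k * of_nat ((n - k) choose k)) = (\<Sum>k=0..n div 2. f k * of_nat ((n - k) choose k))"
  by (rule sum.mono_neutral_right) (use assms in \<open>auto simp: binomial_eq_0\<close>)

lemma fps_compose_X_minus_X2_nth:
  "(Abs_fps a oo (fps_X - fps_X ^ 2)) $ n
     = (\<Sum>k=0..n div 2. (-1) ^ k * a (n - k) * of_nat ((n - k) choose k) :: 'a::comm_ring_1)"
proof -
  have "(Abs_fps a oo (fps_X - fps_X ^ 2)) $ n = (\<Sum>i=0..n. a i * ((-1) ^ (n - i) * of_nat (i choose (n - i))))"
    unfolding fps_compose_nth fps_X_minus_X2_power_nth by (intro sum.cong) auto
  also have "\<dots> = (\<Sum>k=0..n. (-1) ^ k * a (n - k) * of_nat ((n - k) choose k))"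
    by (subst sum.atLeastAtMost_rev) (intro sum.cong; simp)
  also have "\<dots> = (\<Sum>k=0..n div 2. (-1) ^ k * a (n - k) * of_nat ((n - k) choose k))"
    by (rule sum_choose_diff_truncate) simp
  finally show ?thesis .
qed

lemma fps_mult_one_minus_const_X_nth:
  "((1 - fps_const c * fps_X) * f) $ n = f $ n - (if n = 0 then 0 else c * f $ (n - 1))"
  for f :: "'a::comm_ring_1 fps"
proof -
  have "(1 - fps_const c * fps_X) * f = f - fps_const c * (fps_X * f)"
    by (simp only: left_diff_distrib mult_1 mult.assoc)
  then show ?thesis by simp
qed

lemma fps_compose_X_minus_X2_deriv:
  fixes f g :: "'a::idom fps"
  assumes "(1 - fps_const 4 * fps_X) * fps_deriv f = g"
  shows "(1 - fps_const 2 * fps_X) * fps_deriv (f oo (fps_X - fps_X ^ 2)) = g oo (fps_X - fps_X ^ 2)"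
proof -
  let ?P = "fps_X - fps_X ^ 2 :: 'a fps"
  have P0: "?P $ 0 = 0" by simp
  have "(1 - fps_const 4 * fps_X) oo ?P = (1 - fps_const 2 * fps_X) ^ 2"
    by (simp add: fps_compose_sub_distrib fps_compose_mult_distrib power2_eq_square algebra_simps
        flip: fps_const_mult)
  moreover have "fps_deriv ?P = 1 - fps_const 2 * fps_X"
    by (simp add: fps_deriv_power flip: fps_const_neg)
  ultimately have "(1 - fps_const 2 * fps_X) * fps_deriv (f oo ?P)
      = ((1 - fps_const 4 * fps_X) oo ?P) * (fps_deriv f oo ?P)"
    by (simp add: fps_compose_deriv power2_eq_square mult_ac)
  also have "\<dots> = g oo ?P"
    by (simp only: fps_compose_mult_distrib [OF P0, symmetric] assms)
  finally show ?thesis .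
qed

lemma fps_deriv_one_minus_2X_coeff:
  fixes h r :: "'a::comm_ring_1 fps"
  assumes "(1 - fps_const 2 * fps_X) * fps_deriv h = fps_const 2 * h + r"
  shows "of_nat (Suc n) * h $ Suc n = of_nat (Suc n) * (2 * h $ n) + r $ n"
proof -
  have "((1 - fps_const 2 * fps_X) * fps_deriv h) $ n = (fps_const 2 * h + r) $ n"
    by (simp only: assms)
  then show ?thesis
    unfolding fps_mult_one_minus_const_X_nth by (cases n) (simp_all add: algebra_simps)
qed

definition central_binomial_fps :: "real fps" where
  "central_binomial_fps = Abs_fps (\<lambda>m. real (central_binomial m))"

definition central_binomial_oharm_fps :: "real fps" where
  "central_binomial_oharm_fps = Abs_fps (\<lambda>m. real (central_binomial m) * oharm m)"

lemma oharm_Suc: "oharm (Suc m) = oharm m + 1 / (2 * real m + 1)"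
  unfolding oharm_def by (simp add: algebra_simps)

lemma central_binomial_fps_deriv:
  "(1 - fps_const 4 * fps_X) * fps_deriv central_binomial_fps = fps_const 2 * central_binomial_fps"
proof (rule fps_ext)
  fix n
  show "((1 - fps_const 4 * fps_X) * fps_deriv central_binomial_fps) $ n
      = (fps_const 2 * central_binomial_fps) $ n"
    using central_binomial_Suc [of n, where 'a = real] unfolding fps_mult_one_minus_const_X_nth
    by (cases n) (simp_all add: central_binomial_fps_def algebra_simps)
qed

lemma central_binomial_oharm_fps_deriv:
  "(1 - fps_const 4 * fps_X) * fps_deriv central_binomial_oharm_fps
     = fps_const 2 * central_binomial_oharm_fps + fps_const 2 * central_binomial_fps"
proof (rule fps_ext)
  fix n
  have "real (Suc n) * (real (central_binomial (Suc n)) * oharm (Suc n))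
      = (4 * real n + 2) * real (central_binomial n) * oharm n + 2 * real (central_binomial n)"
    unfolding oharm_Suc mult.assoc [symmetric] central_binomial_Suc by (simp add: field_simps)
  then show "((1 - fps_const 4 * fps_X) * fps_deriv central_binomial_oharm_fps) $ n
      = (fps_const 2 * central_binomial_oharm_fps + fps_const 2 * central_binomial_fps) $ n"
    unfolding fps_mult_one_minus_const_X_nth
    by (cases n) (simp_all add: central_binomial_fps_def central_binomial_oharm_fps_def algebra_simps)
qed

lemma central_binomial_fps_compose_nth:
  "(central_binomial_fps oo (fps_X - fps_X ^ 2)) $ n = 2 ^ n"
proof (induction n)
  case 0
  then show ?case by (simp add: central_binomial_fps_def central_binomial_def)
next
  case (Suc n)
  have "(1 - fps_const 2 * fps_X) * fps_deriv (central_binomial_fps oo (fps_X - fps_X ^ 2))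
      = fps_const 2 * (central_binomial_fps oo (fps_X - fps_X ^ 2)) + 0"
    using fps_compose_X_minus_X2_deriv [OF central_binomial_fps_deriv]
    by (simp add: fps_const_mult_apply_left)
  from fps_deriv_one_minus_2X_coeff [OF this, of n] Suc.IH show ?case
    by (simp del: of_nat_Suc)
qed

lemma central_binomial_oharm_fps_compose_nth:
  "(central_binomial_oharm_fps oo (fps_X - fps_X ^ 2)) $ n = 2 ^ n * harm n"
proof (induction n)
  case 0
  then show ?case by (simp add: central_binomial_oharm_fps_def oharm_def harm_altdef)
next
  case (Suc n)
  have "(1 - fps_const 2 * fps_X) * fps_deriv (central_binomial_oharm_fps oo (fps_X - fps_X ^ 2))
      = fps_const 2 * (central_binomial_oharm_fps oo (fps_X - fps_X ^ 2))
        + fps_const 2 * (central_binomial_fps oo (fps_X - fps_X ^ 2))"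
    using fps_compose_X_minus_X2_deriv [OF central_binomial_oharm_fps_deriv]
    by (simp add: fps_compose_add_distrib fps_const_mult_apply_left)
  from fps_deriv_one_minus_2X_coeff [OF this, of n] Suc.IH
  have "real (Suc n) * (central_binomial_oharm_fps oo (fps_X - fps_X ^ 2)) $ Suc n
      = real (Suc n) * (2 ^ Suc n * harm (Suc n))"
    by (simp add: central_binomial_fps_compose_nth harm_Suc field_simps)
  then show ?case by (simp del: of_nat_Suc)
qed

theorem theorem11:
  fixes n :: nat
  shows "(\<Sum>k=0..(n+1) div 2. (-1)^k * (real ((2*(n-k)) choose (n-k)) / real (n choose k))
            * (pochhammer (real n + 1 - 2 * real k) (2*k) / (fact k)^2)) = 2^n \<and>
         (\<Sum>k=0..(n+1) div 2. (-1)^k * (real ((2*(n-k)) choose (n-k)) / real (n choose k))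
            * (pochhammer (real n + 1 - 2 * real k) (2*k) / (fact k)^2) * oharm (n-k)) = 2^n * harm n"
proof -
  have summand: "(-1)^k * (real ((2*(n-k)) choose (n-k)) / real (n choose k))
      * (pochhammer (real n + 1 - 2 * real k) (2*k) / (fact k)^2)
      = (-1)^k * real (central_binomial (n-k)) * real ((n-k) choose k)"
    if "k \<in> {0..(n+1) div 2}" for k
  proof -
    from that have "k \<le> n" by auto
    then show ?thesis
      using pochhammer_double_div_fact_square [of n k, where 'a = real] by (simp add: central_binomial_def)
  qed
  have compose_nth: "(\<Sum>k=0..(n+1) div 2. (-1)^k * a (n-k) * real ((n-k) choose k))
      = (Abs_fps a oo (fps_X - fps_X ^ 2)) $ n" for a
    unfolding fps_compose_X_minus_X2_nth by (rule sum_choose_diff_truncate) simp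
  have "(\<Sum>k=0..(n+1) div 2. (-1)^k * (real ((2*(n-k)) choose (n-k)) / real (n choose k))
      * (pochhammer (real n + 1 - 2 * real k) (2*k) / (fact k)^2))
      = (central_binomial_fps oo (fps_X - fps_X ^ 2)) $ n"
    unfolding central_binomial_fps_def compose_nth [symmetric] by (rule sum.cong [OF refl summand])
  moreover have "(\<Sum>k=0..(n+1) div 2. (-1)^k * (real ((2*(n-k)) choose (n-k)) / real (n choose k))
      * (pochhammer (real n + 1 - 2 * real k) (2*k) / (fact k)^2) * oharm (n-k))
      = (central_binomial_oharm_fps oo (fps_X - fps_X ^ 2)) $ n"
    unfolding central_binomial_oharm_fps_def compose_nth [symmetric]
    by (intro sum.cong refl) (subst summand; simp_all add: mult_ac)
  ultimately show ?thesis
    by (simp add: central_binomial_fps_compose_nth central_binomial_oharm_fps_compose_nth)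
qed

end
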